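(* Let $k\leq m$ be natural numbers, $0<\alpha<1$, and let $U_{(1)}\leq\dots\leq U_{(m)}$ be the order statistics of $m$ i.i.d. $\mathrm{Unif}([0,1])$ random variables. Then with probability at least $1-\tilde{\mathcal{O}}_k\Big(\frac{1}{k}+\frac{1}{k^{(1-\alpha)/\alpha}}\Big)$, \[ \sum_{i=1}^{k}\frac{1}{U_{(i)}^{\alpha}}\leq\frac{2\cdot3^\alpha}{1-\alpha}\cdot m^{\alpha}k^{1-\alpha}. \]
   Context: $\tilde{\mathcal{O}}_k$ hides constants independent of $k$ and $m$ and logarithmic factors in $k$. *)

theory Defs
  imports "HOL-Probability.Probability"
begin

definition unif01 :: "real measure" where
  "unif01 = uniform_measure lborel {0..1}"

definition iid_unif :: "nat \<Rightarrow> (nat \<Rightarrow> real) measure" where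
  "iid_unif m = PiM {..<m} (\<lambda>_. unif01)"

definition order_stat :: "nat \<Rightarrow> (nat \<Rightarrow> real) \<Rightarrow> nat \<Rightarrow> real" where
  "order_stat m x i = sort (map x [0..<m]) ! (i - 1)"

end

theory Submission
  imports Defs
begin

(*
  Cut the sample at s = k/m.  Each of the k smallest points either is at most s or contributes at
  most s^-a, so the sum is at most k s^-a = m^a k^(1-a) plus Y = sum_j [U_j <= s] U_j^-a.
  With probability at least 1 - m r = 1 - k^(-(1-a)/a) no point lies below r = s k^(-1/a); then Y
  is a sum of m i.i.d. copies of g(U) = [r <= U <= s] U^-a, whose mean is at most m^a k^(1-a)/(1-a).
  Chebyshev's inequality with deviation a m^a k^(1-a), together with
  E g(U)^2 <= (r^(1-2a) + s^(1-2a)) ln (s/r) and ln (s/r) = (ln k)/a, bounds the remaining failure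
  probability by (1/k + k^(-(1-a)/a)) (ln k)/a^3.
*)

lemma prob_space_unif01: "prob_space unif01"
  unfolding unif01_def by (rule prob_space_uniform_measure) auto

lemma sets_unif01 [simp, measurable_cong]: "sets unif01 = sets borel"
  unfolding unif01_def by simp

lemma prob_space_iid_unif: "prob_space (iid_unif m)"
  unfolding iid_unif_def by (rule prob_space_PiM) (rule prob_space_unif01)

lemma measure_unif01_lessThan:
  assumes "0 \<le> r" "r \<le> 1"
  shows "measure unif01 {..<r} = r"
proof -
  have "{0..1} \<inter> {..<r} = {0..<r}" using assms by auto
  then show ?thesis
    using assms unfolding unif01_def by (simp add: measure_uniform_measure)
qed

lemma integral_unif01_FTC:
  fixes f F :: "real \<Rightarrow> real"
  assumes "0 \<le> r" "r \<le> s" "s \<le> 1"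
    and F: "\<And>x. x \<in> {r..s} \<Longrightarrow> (F has_real_derivative f x) (at x)"
    and f: "continuous_on {r..s} f"
  shows "integral\<^sup>L unif01 (\<lambda>x. indicator {r..s} x * f x) = F s - F r"
proof -
  have [measurable]: "(\<lambda>x. indicator {r..s} x * f x) \<in> borel_measurable borel"
    using borel_measurable_continuous_on_indicator[OF _ f] by simp
  have "integral\<^sup>L unif01 (\<lambda>x. indicator {r..s} x * f x)
      = integral\<^sup>L (density lborel (\<lambda>x. ennreal (indicator {0..1} x)))
          (\<lambda>x. indicator {r..s} x * f x)"
    unfolding unif01_def uniform_measure_def by (simp add: ennreal_indicator divide_ennreal_def)
  also have "\<dots> = integral\<^sup>L lborel (\<lambda>x. indicator {0..1} x * (indicator {r..s} x * f x))"
    by (subst integral_density) auto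
  also have "\<dots> = (LBINT x:{r..s}. f x)"
    using assms(1,3) unfolding set_lebesgue_integral_def
    by (intro Bochner_Integration.integral_cong) (auto simp: indicator_def)
  also have "\<dots> = (LBINT x=r..s. f x)"
    by (rule interval_integral_Icc[symmetric]) fact
  also have "\<dots> = F s - F r"
    using assms(2) f F
    by (intro interval_integral_FTC_finite)
       (auto simp: has_real_derivative_iff_has_vector_derivative[symmetric]
             intro: has_field_derivative_at_within)
  finally show ?thesis .
qed

lemma integral_unif01_powr:
  fixes p :: real
  assumes "0 < r" "r \<le> s" "s \<le> 1" "p \<noteq> -1"
  shows "integral\<^sup>L unif01 (\<lambda>y. indicator {r..s} y * y powr p)
    = s powr (p + 1) / (p + 1) - r powr (p + 1) / (p + 1)"
proof (rule integral_unif01_FTC)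
  fix y :: real assume "y \<in> {r..s}"
  then have "0 < y" using assms(1) by simp
  with assms(4) show "((\<lambda>y. y powr (p + 1) / (p + 1)) has_real_derivative y powr p) (at y)"
    by (auto intro!: derivative_eq_intros)
next
  show "continuous_on {r..s} (\<lambda>y. y powr p)"
    using assms(1) by (intro continuous_intros) auto
qed (use assms in auto)

lemma integral_unif01_powr_le_ln:
  fixes p :: real
  assumes "0 < r" "r \<le> s" "s \<le> 1"
  shows "integral\<^sup>L unif01 (\<lambda>y. indicator {r..s} y * y powr p)
    \<le> (r powr (p + 1) + s powr (p + 1)) * (ln s - ln r)"
proof -
  define K where "K = r powr (p + 1) + s powr (p + 1)"
  have pointwise: "indicator {r..s} y * y powr p \<le> indicator {r..s} y * (K / y)" for y
  proof (cases "y \<in> {r..s}")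
    case True
    then have "0 < y" using assms(1) by simp
    have "y powr (p + 1) \<le> K"
    proof (cases "0 \<le> p + 1")
      case True
      then have "y powr (p + 1) \<le> s powr (p + 1)"
        using \<open>y \<in> {r..s}\<close> \<open>0 < y\<close> by (intro powr_mono2) auto
      then show ?thesis unfolding K_def by (smt (verit) powr_ge_zero)
    next
      case False
      then have "y powr (p + 1) \<le> r powr (p + 1)"
        using \<open>y \<in> {r..s}\<close> assms(1) by (intro powr_mono2') auto
      then show ?thesis unfolding K_def by (smt (verit) powr_ge_zero)
    qed
    moreover have "y powr p = y powr (p + 1) / y"
      using \<open>0 < y\<close> by (simp add: powr_add)
    ultimately show ?thesis
      using True \<open>0 < y\<close> by (simp add: divide_right_mono)
  qed (simp)
  have "integral\<^sup>L unif01 (\<lambda>y. indicator {r..s} y * y powr p)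
      \<le> integral\<^sup>L unif01 (\<lambda>y. indicator {r..s} y * (K / y))"
  proof (rule integral_mono')
    show "integrable unif01 (\<lambda>y. indicator {r..s} y * (K / y))"
    proof (rule finite_measure.integrable_const_bound)
      show "finite_measure unif01"
        by (rule prob_space.finite_measure[OF prob_space_unif01])
      show "AE y in unif01. norm (indicator {r..s} y * (K / y)) \<le> K / r"
        using assms(1) by (auto simp: K_def indicator_def intro!: divide_left_mono)
    qed measurable
  qed (use pointwise assms(1) in \<open>auto simp: K_def indicator_def\<close>)
  also have "\<dots> = K * ln s - K * ln r"
    using assms
    by (intro integral_unif01_FTC) (auto intro!: derivative_eq_intros continuous_intros)
  finally show ?thesis
    unfolding K_def by (simp add: algebra_simps)
qed

lemma prod_subset_lessThan_eq:
  fixes m :: nat and f :: "'a \<Rightarrow> 'b::comm_monoid_mult"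
  assumes "S \<subseteq> {..<m}"
  shows "(\<Prod>i\<in>S. f (x i)) = (\<Prod>i<m. (if i \<in> S then f else (\<lambda>_. 1)) (x i))"
proof -
  have "{..<m} \<inter> S = S"
    using assms by auto
  then have "(\<Prod>i\<in>S. f (x i)) = (\<Prod>i<m. if i \<in> S then f (x i) else 1)"
    using prod.inter_restrict[of "{..<m}" "\<lambda>i. f (x i)" S] by simp
  also have "\<dots> = (\<Prod>i<m. (if i \<in> S then f else (\<lambda>_. 1)) (x i))"
    by (intro prod.cong) auto
  finally show ?thesis .
qed

lemma integrable_iid_unif_prod:
  fixes f :: "real \<Rightarrow> real"
  assumes "S \<subseteq> {..<m}" "integrable unif01 f"
  shows "integrable (iid_unif m) (\<lambda>x. \<Prod>i\<in>S. f (x i))"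
proof -
  interpret product_sigma_finite "\<lambda>_. unif01"
    by (simp add: product_sigma_finite_def prob_space_imp_sigma_finite prob_space_unif01)
  interpret U: prob_space unif01 by (rule prob_space_unif01)
  show ?thesis
    unfolding prod_subset_lessThan_eq[OF assms(1)] iid_unif_def
    using assms(2) by (intro product_integrable_prod) auto
qed

lemma integral_iid_unif_prod:
  fixes f :: "real \<Rightarrow> real"
  assumes "S \<subseteq> {..<m}" "integrable unif01 f"
  shows "integral\<^sup>L (iid_unif m) (\<lambda>x. \<Prod>i\<in>S. f (x i)) = (integral\<^sup>L unif01 f) ^ card S"
proof -
  interpret product_sigma_finite "\<lambda>_. unif01"
    by (simp add: product_sigma_finite_def prob_space_imp_sigma_finite prob_space_unif01)
  interpret U: prob_space unif01 by (rule prob_space_unif01)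
  have "integral\<^sup>L (iid_unif m) (\<lambda>x. \<Prod>i\<in>S. f (x i))
      = (\<Prod>i<m. integral\<^sup>L unif01 (if i \<in> S then f else (\<lambda>_. 1)))"
    unfolding prod_subset_lessThan_eq[OF assms(1)] iid_unif_def
    using assms(2) by (intro product_integral_prod) auto
  also have "\<dots> = (\<Prod>i<m. if i \<in> S then integral\<^sup>L unif01 f else 1)"
    using U.prob_space by (intro prod.cong) auto
  also have "\<dots> = (integral\<^sup>L unif01 f) ^ card S"
    using assms(1) by (simp add: prod.If_cases Int_absorb1)
  finally show ?thesis .
qed

lemma integrable_iid_unif_mult:
  fixes f :: "real \<Rightarrow> real"
  assumes "j < m" "l < m" "integrable unif01 f" "integrable unif01 (\<lambda>y. (f y)\<^sup>2)"
  shows "integrable (iid_unif m) (\<lambda>x. f (x j) * f (x l))"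
proof (cases "j = l")
  case True
  then show ?thesis
    using integrable_iid_unif_prod[of "{j}" m "\<lambda>y. (f y)\<^sup>2"] assms by (simp add: power2_eq_square)
next
  case False
  then show ?thesis
    using integrable_iid_unif_prod[of "{j, l}" m f] assms by simp
qed

lemma integral_iid_unif_sum:
  fixes g :: "real \<Rightarrow> real"
  assumes "integrable unif01 g"
  shows "integral\<^sup>L (iid_unif m) (\<lambda>x. \<Sum>j<m. g (x j)) = m * integral\<^sup>L unif01 g"
proof -
  have "integrable (iid_unif m) (\<lambda>x. g (x j))"
    and "integral\<^sup>L (iid_unif m) (\<lambda>x. g (x j)) = integral\<^sup>L unif01 g" if "j < m" for j
    using integrable_iid_unif_prod[of "{j}" m g] integral_iid_unif_prod[of "{j}" m g] that assms
    by simp_all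
  then show ?thesis
    by (simp add: Bochner_Integration.integral_sum)
qed

lemma variance_iid_unif_sum:
  fixes g :: "real \<Rightarrow> real"
  assumes [measurable]: "g \<in> borel_measurable borel"
    and sq_int: "integrable unif01 (\<lambda>y. (g y)\<^sup>2)"
  shows "prob_space.variance (iid_unif m) (\<lambda>x. \<Sum>j<m. g (x j))
    = m * prob_space.variance unif01 g"
proof -
  interpret U: prob_space unif01 by (rule prob_space_unif01)
  interpret P: prob_space "iid_unif m" by (rule prob_space_iid_unif)
  have g_int: "integrable unif01 g"
    by (rule U.square_integrable_imp_integrable[OF _ sq_int]) measurable
  define c where "c y = g y - U.expectation g" for y
  have c_int: "integrable unif01 c"
    unfolding c_def using g_int by simp
  have c_sq_int: "integrable unif01 (\<lambda>y. (c y)\<^sup>2)"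
    unfolding c_def power2_diff using g_int sq_int by simp
  have c_mean: "U.expectation c = 0"
    unfolding c_def using g_int U.prob_space by simp
  have c_prod: "P.expectation (\<lambda>x. c (x j) * c (x l)) = (if j = l then U.variance g else 0)"
    if "j < m" "l < m" for j l
  proof (cases "j = l")
    case True
    then show ?thesis
      using integral_iid_unif_prod[of "{j}" m "\<lambda>y. (c y)\<^sup>2"] that c_sq_int
      by (simp add: c_def power2_eq_square)
  next
    case False
    then show ?thesis
      using integral_iid_unif_prod[of "{j, l}" m c] that c_int c_mean by simp
  qed
  have deviation: "(\<Sum>j<m. g (x j)) - P.expectation (\<lambda>x. \<Sum>j<m. g (x j)) = (\<Sum>j<m. c (x j))"
    for x
    using integral_iid_unif_sum[OF g_int] by (simp add: c_def sum_subtractf)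
  have "P.variance (\<lambda>x. \<Sum>j<m. g (x j)) = P.expectation (\<lambda>x. \<Sum>j<m. \<Sum>l<m. c (x j) * c (x l))"
    by (simp add: deviation power2_eq_square sum_product)
  also have "\<dots> = (\<Sum>j<m. P.expectation (\<lambda>x. \<Sum>l<m. c (x j) * c (x l)))"
    by (intro Bochner_Integration.integral_sum Bochner_Integration.integrable_sum
        integrable_iid_unif_mult c_int c_sq_int) auto
  also have "\<dots> = (\<Sum>j<m. \<Sum>l<m. P.expectation (\<lambda>x. c (x j) * c (x l)))"
    by (intro sum.cong refl Bochner_Integration.integral_sum integrable_iid_unif_mult c_int c_sq_int)
      auto
  also have "\<dots> = m * U.variance g"
    using c_prod by simp
  finally show ?thesis .
qed

lemma prob_iid_unif_sum_deviation:
  fixes g :: "real \<Rightarrow> real"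
  assumes [measurable]: "g \<in> borel_measurable borel"
    and sq_int: "integrable unif01 (\<lambda>y. (g y)\<^sup>2)" and "0 < d"
  shows "measure (iid_unif m)
      {x \<in> space (iid_unif m). d \<le> \<bar>(\<Sum>j<m. g (x j)) - m * integral\<^sup>L unif01 g\<bar>}
    \<le> m * integral\<^sup>L unif01 (\<lambda>y. (g y)\<^sup>2) / d\<^sup>2"
proof -
  interpret U: prob_space unif01 by (rule prob_space_unif01)
  interpret P: prob_space "iid_unif m" by (rule prob_space_iid_unif)
  let ?Y = "\<lambda>x. \<Sum>j<m. g (x j)"
  have g_int: "integrable unif01 g"
    by (rule U.square_integrable_imp_integrable[OF _ sq_int]) measurable
  have Y_meas: "?Y \<in> borel_measurable (iid_unif m)"
    unfolding iid_unif_def by measurable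
  have Y_sq_int: "integrable (iid_unif m) (\<lambda>x. (?Y x)\<^sup>2)"
    unfolding power2_eq_square sum_product
    by (intro Bochner_Integration.integrable_sum integrable_iid_unif_mult g_int sq_int) auto
  have "P.prob {x \<in> space (iid_unif m). d \<le> \<bar>?Y x - m * U.expectation g\<bar>}
      = P.prob {x \<in> space (iid_unif m). d \<le> \<bar>?Y x - P.expectation ?Y\<bar>}"
    by (simp only: integral_iid_unif_sum[OF g_int])
  also have "\<dots> \<le> P.variance ?Y / d\<^sup>2"
    by (rule P.Chebyshev_inequality[OF Y_meas Y_sq_int \<open>0 < d\<close>])
  also have "\<dots> = m * U.variance g / d\<^sup>2"
    by (simp only: variance_iid_unif_sum[OF _ sq_int] assms(1))
  also have "\<dots> \<le> m * U.expectation (\<lambda>y. (g y)\<^sup>2) / d\<^sup>2"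
    using U.variance_eq[OF g_int sq_int] by (intro divide_right_mono mult_left_mono) auto
  finally show ?thesis .
qed

lemma prob_iid_unif_exists_less:
  assumes "0 \<le> r" "r \<le> 1"
  shows "measure (iid_unif m) {x \<in> space (iid_unif m). \<exists>j<m. x j < r} \<le> m * r"
proof -
  interpret U: prob_space unif01 by (rule prob_space_unif01)
  interpret P: prob_space "iid_unif m" by (rule prob_space_iid_unif)
  have events: "{x \<in> space (iid_unif m). x j < r} \<in> P.events" if "j < m" for j
  proof -
    have "(\<lambda>x. x j) \<in> borel_measurable (iid_unif m)"
      using measurable_component_singleton[of j "{..<m}" "\<lambda>_. unif01"] that
      unfolding iid_unif_def by (simp add: measurable_cong_sets[OF refl sets_unif01])
    then show ?thesis
      by measurable
  qed
  have prob_less: "P.prob {x \<in> space (iid_unif m). x j < r} = r" if "j < m" for j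
  proof -
    have "P.prob {x \<in> space (iid_unif m). x j < r}
        = P.expectation (indicator {x \<in> space (iid_unif m). x j < r})"
      using events[OF that] by (simp add: P.emeasure_eq_measure)
    also have "\<dots> = P.expectation (\<lambda>x. indicator {..<r} (x j))"
      by (intro Bochner_Integration.integral_cong) (auto simp: indicator_def)
    also have "\<dots> = U.expectation (indicator {..<r})"
      using integral_iid_unif_prod[of "{j}" m "indicator {..<r}"] that
      by (simp add: integrable_real_indicator U.emeasure_finite less_top[symmetric])
    also have "\<dots> = r"
      using measure_unif01_lessThan[OF assms] by simp
    finally show ?thesis .
  qed
  have "{x \<in> space (iid_unif m). \<exists>j<m. x j < r} = (\<Union>j<m. {x \<in> space (iid_unif m). x j < r})"
    by auto
  also have "P.prob \<dots> \<le> (\<Sum>j<m. P.prob {x \<in> space (iid_unif m). x j < r})"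
    using events by (intro P.finite_measure_subadditive_finite) auto
  also have "\<dots> = m * r"
    using prob_less by simp
  finally show ?thesis .
qed

lemma sorted_nth_le_iff_card:
  fixes ys :: "'a::linorder list"
  assumes "sorted ys" "i < length ys"
  shows "ys ! i \<le> t \<longleftrightarrow> i < card {j. j < length ys \<and> ys ! j \<le> t}"
proof
  assume "ys ! i \<le> t"
  then have "{..i} \<subseteq> {j. j < length ys \<and> ys ! j \<le> t}"
    using assms sorted_nth_mono[OF assms(1)] by (auto intro: order_trans)
  then have "card {..i} \<le> card {j. j < length ys \<and> ys ! j \<le> t}"
    by (intro card_mono) auto
  then show "i < card {j. j < length ys \<and> ys ! j \<le> t}"
    by simp
next
  assume i: "i < card {j. j < length ys \<and> ys ! j \<le> t}"
  show "ys ! i \<le> t"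
  proof (rule ccontr)
    assume "\<not> ys ! i \<le> t"
    have "j < i" if "j < length ys" "ys ! j \<le> t" for j
    proof (rule ccontr)
      assume "\<not> j < i"
      then have "ys ! i \<le> ys ! j"
        using sorted_nth_mono[OF assms(1)] that(1) by simp
      then show False
        using that(2) \<open>\<not> ys ! i \<le> t\<close> by simp
    qed
    then have "{j. j < length ys \<and> ys ! j \<le> t} \<subseteq> {..<i}"
      by auto
    then have "card {j. j < length ys \<and> ys ! j \<le> t} \<le> i"
      using card_mono[of "{..<i}"] by fastforce
    then show False
      using i by simp
  qed
qed

lemma order_stat_le_iff:
  assumes "1 \<le> i" "i \<le> m"
  shows "order_stat m x i \<le> t \<longleftrightarrow> real i \<le> (\<Sum>j<m. indicator {..t} (x j))"
proof -
  let ?xs = "map x [0..<m]"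
  have "order_stat m x i \<le> t \<longleftrightarrow> i - 1 < card {j. j < m \<and> sort ?xs ! j \<le> t}"
    unfolding order_stat_def using assms by (subst sorted_nth_le_iff_card) auto
  also have "card {j. j < m \<and> sort ?xs ! j \<le> t} = length (filter (\<lambda>y. y \<le> t) (sort ?xs))"
    by (simp add: length_filter_conv_card)
  also have "\<dots> = length (filter (\<lambda>y. y \<le> t) ?xs)"
    by (metis filter_sort length_sort)
  also have "\<dots> = card {j. j < m \<and> x j \<le> t}"
    by (simp add: length_filter_conv_card cong: conj_cong)
  finally have "order_stat m x i \<le> t \<longleftrightarrow> i \<le> card {j. j < m \<and> x j \<le> t}"
    using assms by linarith
  moreover have "real (card {j. j < m \<and> x j \<le> t}) = (\<Sum>j<m. indicator {..t} (x j))"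
    by (simp add: indicator_def sum.If_cases Collect_conj_eq lessThan_def Int_commute)
  ultimately show ?thesis
    by linarith
qed

lemma borel_measurable_order_stat:
  assumes "1 \<le> i" "i \<le> m"
  shows "(\<lambda>x. order_stat m x i) \<in> borel_measurable (iid_unif m)"
proof (rule borel_measurableI_le)
  fix t
  have "{x \<in> space (iid_unif m). order_stat m x i \<le> t}
      = {x \<in> space (iid_unif m). real i \<le> (\<Sum>j<m. indicator {..t} (x j))}"
    using order_stat_le_iff[OF assms] by auto
  also have "\<dots> \<in> sets (iid_unif m)"
    unfolding iid_unif_def by measurable
  finally show "{x \<in> space (iid_unif m). order_stat m x i \<le> t} \<in> sets (iid_unif m)" .
qed

lemma borel_measurable_sum_order_stat_powr:
  assumes "k \<le> m"
  shows "(\<lambda>x. \<Sum>i=1..k. 1 / order_stat m x i powr \<alpha>) \<in> borel_measurable (iid_unif m)"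
proof (intro borel_measurable_sum)
  fix i assume "i \<in> {1..k}"
  then have "(\<lambda>x. order_stat m x i) \<in> borel_measurable (iid_unif m)"
    using assms by (intro borel_measurable_order_stat) auto
  then show "(\<lambda>x. 1 / order_stat m x i powr \<alpha>) \<in> borel_measurable (iid_unif m)"
    by measurable
qed

lemma sum_order_stat_powr_le:
  fixes x :: "nat \<Rightarrow> real" and \<alpha> r s :: real
  assumes "k \<le> m" "0 < s" "0 \<le> \<alpha>" and "\<And>j. j < m \<Longrightarrow> r \<le> x j"
  shows "(\<Sum>i=1..k. 1 / order_stat m x i powr \<alpha>)
    \<le> (\<Sum>j<m. indicator {r..s} (x j) * x j powr (- \<alpha>)) + k / s powr \<alpha>"
proof -
  let ?ys = "sort (map x [0..<m])"
  define h where "h y = (if y \<le> s then 1 / y powr \<alpha> else 0)" for y :: real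
  have h_nonneg: "0 \<le> h y" for y
    unfolding h_def by simp
  have pointwise: "1 / y powr \<alpha> \<le> h y + 1 / s powr \<alpha>" for y
  proof (cases "y \<le> s")
    case False
    then have "s powr \<alpha> \<le> y powr \<alpha>"
      using assms(2,3) by (intro powr_mono2) auto
    then show ?thesis
      using False assms(2) unfolding h_def by (simp add: frac_le)
  qed (simp add: h_def)
  have "(\<Sum>i=1..k. 1 / order_stat m x i powr \<alpha>) = (\<Sum>i<k. 1 / (?ys ! i) powr \<alpha>)"
    unfolding order_stat_def by (rule sum.reindex_bij_witness[of _ Suc "\<lambda>i. i - 1"]) auto
  also have "\<dots> \<le> (\<Sum>i<k. h (?ys ! i) + 1 / s powr \<alpha>)"
    by (intro sum_mono pointwise)
  also have "\<dots> = (\<Sum>i<k. h (?ys ! i)) + k / s powr \<alpha>"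
    by (simp add: sum.distrib)
  also have "(\<Sum>i<k. h (?ys ! i)) \<le> (\<Sum>i<m. h (?ys ! i))"
    using assms(1) by (intro sum_mono2) (auto simp: h_nonneg)
  also have "(\<Sum>i<m. h (?ys ! i)) = sum_list (map h ?ys)"
    by (simp add: sum_list_sum_nth atLeast0LessThan)
  also have "\<dots> = sum_list (map h (map x [0..<m]))"
    by (metis mset_map mset_sort sum_mset_sum_list)
  also have "\<dots> = (\<Sum>j<m. h (x j))"
    by (simp add: sum_list_sum_nth atLeast0LessThan)
  also have "\<dots> = (\<Sum>j<m. indicator {r..s} (x j) * x j powr (- \<alpha>))"
    using assms(4) by (intro sum.cong) (auto simp: h_def indicator_def powr_minus_divide)
  finally show ?thesis
    by simp
qed

lemma prob_sum_order_stat_powr_gt: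
  fixes \<alpha> r s d :: real and m k :: nat
  assumes \<alpha>: "0 < \<alpha>" "\<alpha> < 1" and rs: "0 < r" "r \<le> s" "s \<le> 1"
    and "k \<le> m" "0 < d"
  shows "measure (iid_unif m) {x \<in> space (iid_unif m).
      m * s powr (1 - \<alpha>) / (1 - \<alpha>) + d + k / s powr \<alpha> < (\<Sum>i=1..k. 1 / order_stat m x i powr \<alpha>)}
    \<le> m * r + m * ((r powr (1 - 2 * \<alpha>) + s powr (1 - 2 * \<alpha>)) * (ln s - ln r)) / d\<^sup>2"
proof -
  interpret U: prob_space unif01 by (rule prob_space_unif01)
  interpret P: prob_space "iid_unif m" by (rule prob_space_iid_unif)
  let ?S = "\<lambda>x. \<Sum>i=1..k. 1 / order_stat m x i powr \<alpha>"
  let ?t = "m * s powr (1 - \<alpha>) / (1 - \<alpha>) + d + k / s powr \<alpha>"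
  define g where "g y = indicator {r..s} y * y powr (- \<alpha>)" for y
  let ?Y = "\<lambda>x. \<Sum>j<m. g (x j)"
  define Low where "Low = {x \<in> space (iid_unif m). \<exists>j<m. x j < r}"
  define Dev where "Dev = {x \<in> space (iid_unif m). d \<le> \<bar>?Y x - m * U.expectation g\<bar>}"
  have g_meas [measurable]: "g \<in> borel_measurable borel"
    unfolding g_def by measurable
  have g_sq: "(g y)\<^sup>2 = indicator {r..s} y * y powr (-2 * \<alpha>)" for y
    unfolding g_def by (simp add: power2_eq_square powr_add[symmetric] indicator_def)
  have g_sq_int: "integrable unif01 (\<lambda>y. (g y)\<^sup>2)"
  proof (rule U.integrable_const_bound[of _ "r powr (-2 * \<alpha>)"])
    show "AE y in unif01. norm ((g y)\<^sup>2) \<le> r powr (-2 * \<alpha>)"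
      using rs \<alpha> by (auto simp: g_sq indicator_def intro!: powr_mono2')
  qed measurable
  have mean: "U.expectation g \<le> s powr (1 - \<alpha>) / (1 - \<alpha>)"
    using integral_unif01_powr[OF rs, of "- \<alpha>"] \<alpha> unfolding g_def by simp
  have second_moment: "U.expectation (\<lambda>y. (g y)\<^sup>2)
      \<le> (r powr (1 - 2 * \<alpha>) + s powr (1 - 2 * \<alpha>)) * (ln s - ln r)"
    using integral_unif01_powr_le_ln[OF rs, of "-2 * \<alpha>"] unfolding g_sq by simp
  have "{x \<in> space (iid_unif m). ?t < ?S x} \<subseteq> Low \<union> Dev"
  proof (intro subsetI, rule ccontr)
    fix x
    assume x: "x \<in> {x \<in> space (iid_unif m). ?t < ?S x}" and "x \<notin> Low \<union> Dev"
    then have ge_r: "\<And>j. j < m \<Longrightarrow> r \<le> x j" and "\<bar>?Y x - m * U.expectation g\<bar> < d"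
      unfolding Low_def Dev_def by auto
    have "?S x \<le> ?Y x + k / s powr \<alpha>"
      unfolding g_def using sum_order_stat_powr_le[OF \<open>k \<le> m\<close>, of s \<alpha> r x] ge_r rs \<alpha> by simp
    also have "?Y x \<le> m * s powr (1 - \<alpha>) / (1 - \<alpha>) + d"
      using \<open>\<bar>?Y x - m * U.expectation g\<bar> < d\<close> mult_left_mono[OF mean, of "real m"] by simp
    finally show False
      using x by simp
  qed
  then have "P.prob {x \<in> space (iid_unif m). ?t < ?S x} \<le> P.prob (Low \<union> Dev)"
    by (intro P.finite_measure_mono) (auto simp: Low_def Dev_def iid_unif_def)
  also have "\<dots> \<le> P.prob Low + P.prob Dev"
    by (intro measure_Un_le) (auto simp: Low_def Dev_def iid_unif_def)
  also have "P.prob Low \<le> m * r"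
    unfolding Low_def using rs by (intro prob_iid_unif_exists_less) auto
  also have "P.prob Dev \<le> m * U.expectation (\<lambda>y. (g y)\<^sup>2) / d\<^sup>2"
    unfolding Dev_def by (intro prob_iid_unif_sum_deviation g_meas g_sq_int) fact
  also have "\<dots> \<le> m * ((r powr (1 - 2 * \<alpha>) + s powr (1 - 2 * \<alpha>)) * (ln s - ln r)) / d\<^sup>2"
    using second_moment by (intro divide_right_mono mult_left_mono) auto
  finally show ?thesis
    by simp
qed

(* The constant 2 * 3 powr a / (1 - a) of the statement has slack: 1 / (1 - a) + a + 1 suffices. *)
lemma cutoff_threshold_le:
  fixes \<alpha> k m :: real
  assumes \<alpha>: "0 < \<alpha>" "\<alpha> < 1" and "0 < k" "0 < m"
  defines "s \<equiv> k / m" and "M \<equiv> m powr \<alpha> * k powr (1 - \<alpha>)"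
  shows "m * s powr (1 - \<alpha>) / (1 - \<alpha>) + \<alpha> * M + k / s powr \<alpha> \<le> 2 * 3 powr \<alpha> / (1 - \<alpha>) * M"
proof -
  have "m * s powr (1 - \<alpha>) = M" and "k / s powr \<alpha> = M"
    unfolding s_def M_def using assms by (simp_all add: powr_divide powr_diff)
  then have "m * s powr (1 - \<alpha>) / (1 - \<alpha>) + \<alpha> * M + k / s powr \<alpha> = (1 / (1 - \<alpha>) + \<alpha> + 1) * M"
    by (simp add: algebra_simps)
  also have "\<dots> \<le> (1 / (1 - \<alpha>) + 1 / (1 - \<alpha>)) * M"
    using \<alpha> assms by (intro mult_right_mono) (simp_all add: field_simps M_def)
  also have "\<dots> \<le> 2 * 3 powr \<alpha> / (1 - \<alpha>) * M"
    using \<alpha> assms unfolding M_def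
    by (intro mult_right_mono) (auto simp: add_divide_distrib[symmetric] intro!: divide_right_mono ge_one_powr_ge_zero)
  finally show ?thesis .
qed

lemma cutoff_failure_bound_le:
  fixes \<alpha> k m :: real
  assumes \<alpha>: "0 < \<alpha>" "\<alpha> < 1" and k: "1 \<le> k" and m: "0 < m"
  defines "s \<equiv> k / m" and "r \<equiv> k / m * k powr (- 1 / \<alpha>)" and "M \<equiv> m powr \<alpha> * k powr (1 - \<alpha>)"
  shows "m * r + m * ((r powr (1 - 2 * \<alpha>) + s powr (1 - 2 * \<alpha>)) * (ln s - ln r)) / (\<alpha> * M)\<^sup>2
    \<le> (1 + 1 / \<alpha> ^ 3) * (1 + ln k) * (1 / k + 1 / k powr ((1 - \<alpha>) / \<alpha>))"
proof -
  define t where "t = k powr (- 1 / \<alpha>)"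
  define T where "T = k powr (1 - 1 / \<alpha>)"
  have r_eq: "r = s * t"
    unfolding r_def s_def t_def ..
  have k_pos: "0 < k" and s_pos: "0 < s" and t_pos: "0 < t" and M_pos: "0 < M"
    using k m by (simp_all add: s_def t_def M_def)
  have "m * r = k * t"
    unfolding r_eq s_def using m by simp
  also have "\<dots> = T"
    unfolding t_def T_def using k_pos by (simp add: powr_diff powr_minus_divide)
  finally have "m * r = T" .
  moreover have "ln s - ln r = ln k / \<alpha>"
    unfolding r_eq t_def using s_pos k_pos by (simp add: ln_mult ln_powr)
  moreover have s_term: "m * s powr (1 - 2 * \<alpha>) / M\<^sup>2 = 1 / k"
    unfolding s_def M_def using k_pos m
    by (simp add: powr_divide powr_diff power2_eq_square powr_add[symmetric] field_simps)
  moreover have "m * r powr (1 - 2 * \<alpha>) / M\<^sup>2 = T"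
  proof -
    have shift: "1 / k * k powr e = k powr (e - 1)" for e
      using k_pos by (simp add: powr_diff)
    have "m * r powr (1 - 2 * \<alpha>) / M\<^sup>2 = m * s powr (1 - 2 * \<alpha>) / M\<^sup>2 * t powr (1 - 2 * \<alpha>)"
      unfolding r_eq using s_pos t_pos by (simp add: powr_mult)
    also have "\<dots> = k powr (- 1 / \<alpha> * (1 - 2 * \<alpha>) - 1)"
      unfolding t_def s_term by (simp only: powr_powr shift)
    also have "- 1 / \<alpha> * (1 - 2 * \<alpha>) - 1 = 1 - 1 / \<alpha>"
      using \<alpha> by (simp add: field_simps)
    finally show ?thesis
      unfolding T_def .
  qed
  moreover have "m * ((a + b) * L) / (\<alpha> * M)\<^sup>2 = (m * a / M\<^sup>2 + m * b / M\<^sup>2) * L / \<alpha>\<^sup>2" for a b L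
    using \<alpha> M_pos by (simp add: field_simps)
  ultimately have "m * r + m * ((r powr (1 - 2 * \<alpha>) + s powr (1 - 2 * \<alpha>)) * (ln s - ln r)) / (\<alpha> * M)\<^sup>2
      = T + (T + 1 / k) * (ln k / \<alpha>) / \<alpha>\<^sup>2"
    by (simp only:)
  also have "\<dots> \<le> T + (T + 1 / k) * (ln k / \<alpha>) / \<alpha>\<^sup>2 + (1 / k + (1 / k + T) * (ln k + 1 / \<alpha> ^ 3))"
    using k \<alpha> by (simp add: T_def)
  also have "\<dots> = (1 + 1 / \<alpha> ^ 3) * (1 + ln k) * (1 / k + T)"
    using \<alpha> by (simp add: field_simps power2_eq_square power3_eq_cube)
  also have "T = 1 / k powr ((1 - \<alpha>) / \<alpha>)"
  proof -
    have "1 - 1 / \<alpha> = - ((1 - \<alpha>) / \<alpha>)"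
      using \<alpha> by (simp add: field_simps)
    then show ?thesis
      unfolding T_def by (simp add: powr_minus_divide)
  qed
  finally show ?thesis .
qed

lemma prob_sum_order_stat_powr_le:
  fixes \<alpha> :: real and m k :: nat
  assumes \<alpha>: "0 < \<alpha>" "\<alpha> < 1" and k: "1 \<le> k" "k \<le> m"
  shows "measure (iid_unif m) {x \<in> space (iid_unif m). (\<Sum>i=1..k. 1 / order_stat m x i powr \<alpha>)
      \<le> 2 * 3 powr \<alpha> / (1 - \<alpha>) * real m powr \<alpha> * real k powr (1 - \<alpha>)}
    \<ge> 1 - (1 + 1 / \<alpha> ^ 3) * (1 + ln (real k)) * (1 / real k + 1 / real k powr ((1 - \<alpha>) / \<alpha>))"
proof -
  interpret P: prob_space "iid_unif m" by (rule prob_space_iid_unif)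
  define s where "s = real k / real m"
  define r where "r = real k / real m * real k powr (- 1 / \<alpha>)"
  define M where "M = real m powr \<alpha> * real k powr (1 - \<alpha>)"
  let ?S = "\<lambda>x. \<Sum>i=1..k. 1 / order_stat m x i powr \<alpha>"
  define Good where "Good = {x \<in> space (iid_unif m).
    ?S x \<le> 2 * 3 powr \<alpha> / (1 - \<alpha>) * real m powr \<alpha> * real k powr (1 - \<alpha>)}"
  define Bad where "Bad = {x \<in> space (iid_unif m).
    m * s powr (1 - \<alpha>) / (1 - \<alpha>) + \<alpha> * M + k / s powr \<alpha> < ?S x}"
  have k_pos: "0 < real k" and m_pos: "0 < real m"
    using k by auto
  have "real k powr (- 1 / \<alpha>) \<le> real k powr 0"
    using k \<alpha> by (intro powr_mono) auto
  then have r_le_s: "r \<le> s"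
    unfolding r_def s_def using k_pos m_pos by (intro mult_left_le) auto
  have [measurable]: "?S \<in> borel_measurable (iid_unif m)"
    using k(2) by (rule borel_measurable_sum_order_stat_powr)
  have "space (iid_unif m) - Bad \<subseteq> Good"
    using cutoff_threshold_le[OF \<alpha> k_pos m_pos]
    unfolding Bad_def Good_def s_def M_def by (auto simp: mult.assoc)
  moreover have "Bad \<in> P.events" and "Good \<in> P.events"
    unfolding Bad_def Good_def by measurable
  ultimately have "1 - P.prob Bad \<le> P.prob Good"
    using P.prob_compl[of Bad] P.finite_measure_mono[of "space (iid_unif m) - Bad" Good] by simp
  moreover have "P.prob Bad
      \<le> m * r + m * ((r powr (1 - 2 * \<alpha>) + s powr (1 - 2 * \<alpha>)) * (ln s - ln r)) / (\<alpha> * M)\<^sup>2"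
    unfolding Bad_def using \<alpha> r_le_s k k_pos m_pos
    by (intro prob_sum_order_stat_powr_gt) (auto simp: r_def s_def M_def)
  moreover have "\<dots> \<le> (1 + 1 / \<alpha> ^ 3) * (1 + ln k) * (1 / k + 1 / k powr ((1 - \<alpha>) / \<alpha>))"
    unfolding r_def s_def M_def using \<alpha> k m_pos by (intro cutoff_failure_bound_le) auto
  ultimately show ?thesis
    unfolding Good_def by linarith
qed

theorem lemma10:
  fixes \<alpha> :: real
  assumes "0 < \<alpha>" and "\<alpha> < 1"
  shows "\<exists>C c::real. \<forall>m k::nat. 1 \<le> k \<longrightarrow> k \<le> m \<longrightarrow>
    measure (iid_unif m)
      {x \<in> space (iid_unif m).
         (\<Sum>i=1..k. 1 / (order_stat m x i) powr \<alpha>)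
           \<le> 2 * 3 powr \<alpha> / (1 - \<alpha>) * real m powr \<alpha> * real k powr (1 - \<alpha>)}
    \<ge> 1 - C * (1 + ln (real k)) powr c * (1 / real k + 1 / real k powr ((1 - \<alpha>) / \<alpha>))"
proof (intro exI allI impI)
  fix m k :: nat
  assume "1 \<le> k" "k \<le> m"
  then show "measure (iid_unif m)
      {x \<in> space (iid_unif m). (\<Sum>i=1..k. 1 / (order_stat m x i) powr \<alpha>)
         \<le> 2 * 3 powr \<alpha> / (1 - \<alpha>) * real m powr \<alpha> * real k powr (1 - \<alpha>)}
    \<ge> 1 - (1 + 1 / \<alpha> ^ 3) * (1 + ln (real k)) powr 1
        * (1 / real k + 1 / real k powr ((1 - \<alpha>) / \<alpha>))"
    using prob_sum_order_stat_powr_le[OF assms] by simp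
qed

end
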